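(* For every integer $n\ge 1$, let $M_F(n)$ denote the maximum modulus of an independence root over all forests on $n$ vertices. Then $$M_F(n)\le \begin{cases} 2^{\frac{n-1}{2}}+\frac{n-1}{2} & \text{if } n \text{ is odd},\\ 2^{\frac{n-2}{2}}+\frac{n}{2} & \text{if } n \text{ is even}.\end{cases}$$
   Context: For a finite simple graph $G$, the independence polynomial is $i(G,x)=\sum_{k=0}^{\alpha(G)} i_k x^k$, where $i_k$ is the number of independent sets of size $k$ in $G$ (with $i_0=1$) and $\alpha(G)$ is the independence number. Its complex roots are the independence roots of $G$. A forest is an acyclic graph. *)

theory Defs
  imports "HOL-Analysis.Analysis" "HOL-Computational_Algebra.Polynomial"
begin

definition simple_graph :: "'a set \<Rightarrow> ('a \<Rightarrow> 'a \<Rightarrow> bool) \<Rightarrow> bool" where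
  "simple_graph V E \<longleftrightarrow> finite V \<and> (\<forall>u v. E u v \<longrightarrow> u \<in> V \<and> v \<in> V)
     \<and> (\<forall>u v. E u v \<longrightarrow> E v u) \<and> (\<forall>v. \<not> E v v)"

definition is_cycle :: "'a set \<Rightarrow> ('a \<Rightarrow> 'a \<Rightarrow> bool) \<Rightarrow> 'a list \<Rightarrow> bool" where
  "is_cycle V E cs \<longleftrightarrow> length cs \<ge> 3 \<and> distinct cs \<and> set cs \<subseteq> V
     \<and> (\<forall>i. Suc i < length cs \<longrightarrow> E (cs ! i) (cs ! Suc i))
     \<and> E (last cs) (hd cs)"

definition forest :: "'a set \<Rightarrow> ('a \<Rightarrow> 'a \<Rightarrow> bool) \<Rightarrow> bool" where
  "forest V E \<longleftrightarrow> simple_graph V E \<and> (\<nexists>cs. is_cycle V E cs)"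

definition independent_set :: "'a set \<Rightarrow> ('a \<Rightarrow> 'a \<Rightarrow> bool) \<Rightarrow> 'a set \<Rightarrow> bool" where
  "independent_set V E S \<longleftrightarrow> S \<subseteq> V \<and> (\<forall>u\<in>S. \<forall>v\<in>S. \<not> E u v)"

definition indep_count :: "'a set \<Rightarrow> ('a \<Rightarrow> 'a \<Rightarrow> bool) \<Rightarrow> nat \<Rightarrow> nat" where
  "indep_count V E k = card {S. independent_set V E S \<and> card S = k}"

text \<open>Independence polynomial i(G,x) = sum_k i_k x^k (complex coefficients);
  i_k = 0 for k > card V, so summing up to card V covers up to alpha(G).\<close>

definition indep_poly :: "'a set \<Rightarrow> ('a \<Rightarrow> 'a \<Rightarrow> bool) \<Rightarrow> complex poly" where
  "indep_poly V E = (\<Sum>k\<le>card V. monom (of_nat (indep_count V E k)) k)"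

end

theory Submission
  imports Defs
begin

text \<open>By the Enestrom-Kakeya theorem, the roots of a polynomial with positive coefficients
  \<open>a\<^sub>0, \<dots>, a\<^sub>d\<close> satisfying \<open>a\<^sub>k \<le> R a\<^sub>k\<^sub>+\<^sub>1\<close> lie in the disc \<open>|z| \<le> R\<close>. The coefficients
  \<open>i\<^sub>0, \<dots>, i\<^sub>\<alpha>\<close> of the independence polynomial of a forest on \<open>n\<close> vertices are positive and
  satisfy \<open>i\<^sub>k \<le> F(n) i\<^sub>k\<^sub>+\<^sub>1\<close>, with \<open>F(n)\<close> the claimed bound. This ratio bound is proved by
  induction, deleting a vertex \<open>v\<close> of degree at most one and using
  \<open>i\<^sub>k\<^sub>+\<^sub>1(G) = i\<^sub>k\<^sub>+\<^sub>1(G - v) + i\<^sub>k(G - N[v])\<close>. The ratio bounds of the smaller forests combine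
  directly, except at the top coefficient when deleting \<open>v\<close> lowers the independence number; there
  the extra term is controlled by the number of maximum independent sets of a forest on \<open>m\<close>
  vertices, which is at most \<open>2 ^ (m div 2)\<close>.\<close>

subsection \<open>Counting independent sets\<close>

lemma finite_independent_sets: "finite W \<Longrightarrow> finite {S. independent_set W E S \<and> P S}"
  unfolding independent_set_def by (rule finite_subset[of _ "Pow W"]) auto

lemma indep_count_0: "finite W \<Longrightarrow> indep_count W E 0 = 1"
proof -
  assume "finite W"
  then have "{S. independent_set W E S \<and> card S = 0} = {{}}"
    unfolding independent_set_def by (auto dest: finite_subset)
  then show ?thesis by (simp add: indep_count_def)
qed

lemma indep_count_mono:
  assumes "finite W'" "W \<subseteq> W'"
  shows "indep_count W E k \<le> indep_count W' E k"
  unfolding indep_count_def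
  by (rule card_mono[OF finite_independent_sets[OF assms(1)]])
     (use assms(2) in \<open>auto simp: independent_set_def\<close>)

lemma indep_count_eq_0: "finite W \<Longrightarrow> card W < k \<Longrightarrow> indep_count W E k = 0"
  unfolding indep_count_def independent_set_def by (auto dest: card_mono)

lemma indep_count_pos_Diff:
  assumes "finite W" "0 < indep_count W E (Suc k)"
  shows "0 < indep_count (W - {u}) E k"
proof -
  have "{S. independent_set W E S \<and> card S = Suc k} \<noteq> {}"
    using assms(2) unfolding indep_count_def by (metis card.empty less_irrefl)
  then obtain S where S: "independent_set W E S" "card S = Suc k"
    by blast
  have "k \<le> card (S - {u})"
    using diff_card_le_card_Diff[of "{u}" S] S(2) by simp
  then obtain T where "T \<subseteq> S - {u}" "card T = k"
    by (meson obtain_subset_with_card_n)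
  then have "T \<in> {T. independent_set (W - {u}) E T \<and> card T = k}"
    using S(1) unfolding independent_set_def by blast
  then show ?thesis
    unfolding indep_count_def using finite_independent_sets[of "W - {u}"] assms(1)
    by (auto simp: card_gt_0_iff)
qed

lemma indep_count_pos_le:
  assumes "finite W" "0 < indep_count W E m" "k \<le> m"
  shows "0 < indep_count W E k"
  using assms(2,3)
proof (induction m)
  case (Suc m)
  have "0 < indep_count W E m"
    using indep_count_pos_Diff[OF assms(1) Suc.prems(1), of undefined]
      indep_count_mono[OF assms(1) Diff_subset] by (meson order_less_le_trans)
  then show ?case using Suc by (cases "k = Suc m") auto
qed simp

lemma indep_count_Suc:
  assumes sym: "\<And>x y. E x y \<Longrightarrow> E y x" and irrefl: "\<And>x. \<not> E x x"
    and "finite W" "v \<in> W"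
  shows "indep_count W E (Suc k)
           = indep_count (W - {v}) E (Suc k) + indep_count (W - insert v {w. E v w}) E k"
proof -
  let ?F = "\<lambda>U j. {S. independent_set U E S \<and> card S = j}"
  have split: "?F W (Suc k) = ?F (W - {v}) (Suc k) \<union> insert v ` ?F (W - insert v {w. E v w}) k"
  proof (intro equalityI subsetI)
    fix S assume S: "S \<in> ?F W (Suc k)"
    then have "finite S" using \<open>finite W\<close> finite_subset by (auto simp: independent_set_def)
    show "S \<in> ?F (W - {v}) (Suc k) \<union> insert v ` ?F (W - insert v {w. E v w}) k"
    proof (cases "v \<in> S")
      case True
      then have "S - {v} \<in> ?F (W - insert v {w. E v w}) k" "S = insert v (S - {v})"
        using S \<open>finite S\<close> by (auto simp: independent_set_def)
      then show ?thesis by blast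
    qed (use S in \<open>auto simp: independent_set_def\<close>)
  next
    fix S assume "S \<in> ?F (W - {v}) (Suc k) \<union> insert v ` ?F (W - insert v {w. E v w}) k"
    then show "S \<in> ?F W (Suc k)"
    proof
      assume "S \<in> insert v ` ?F (W - insert v {w. E v w}) k"
      then obtain T where T: "T \<in> ?F (W - insert v {w. E v w}) k" "S = insert v T" by blast
      then have "finite T" "v \<notin> T"
        using \<open>finite W\<close> finite_subset by (auto simp: independent_set_def)
      then show ?thesis
        using T \<open>v \<in> W\<close> sym irrefl by (auto simp: independent_set_def)
    qed (auto simp: independent_set_def)
  qed
  have "inj_on (insert v) (?F (W - insert v {w. E v w}) k)"
    by (rule inj_onI) (auto simp: independent_set_def dest!: insert_ident[THEN iffD1, rotated 2])
  moreover have "?F (W - {v}) (Suc k) \<inter> insert v ` ?F (W - insert v {w. E v w}) k = {}"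
    by (auto simp: independent_set_def)
  ultimately show ?thesis
    unfolding indep_count_def split
    by (simp add: card_Un_disjoint card_image finite_independent_sets \<open>finite W\<close>)
qed

subsection \<open>Leaves of forests\<close>

definition is_path :: "'a set \<Rightarrow> ('a \<Rightarrow> 'a \<Rightarrow> bool) \<Rightarrow> 'a list \<Rightarrow> bool" where
  "is_path W E p \<longleftrightarrow> p \<noteq> [] \<and> distinct p \<and> set p \<subseteq> W
     \<and> (\<forall>i. Suc i < length p \<longrightarrow> E (p ! i) (p ! Suc i))"

lemma is_path_length_le: "finite W \<Longrightarrow> is_path W E p \<Longrightarrow> length p \<le> card W"
  unfolding is_path_def by (metis card_mono distinct_card)

lemma is_path_Cons:
  assumes "is_path W E p" "z \<in> W" "z \<notin> set p" "E z (hd p)"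
  shows "is_path W E (z # p)"
  using assms unfolding is_path_def by (auto simp: hd_conv_nth nth_Cons split: nat.split)

lemma is_cycle_take_path:
  assumes "is_path V E p" "2 \<le> j" "j < length p" "E (p ! j) (hd p)"
  shows "is_cycle V E (take (Suc j) p)"
  unfolding is_cycle_def
proof (intro conjI allI impI)
  show "E (last (take (Suc j) p)) (hd (take (Suc j) p))"
    using assms by (auto simp: take_Suc_conv_app_nth hd_append hd_take is_path_def)
qed (use assms in \<open>auto simp: is_path_def dest: in_set_takeD\<close>)

lemma forest_has_leaf:
  assumes "forest V E" "W \<subseteq> V" "W \<noteq> {}"
  shows "\<exists>v\<in>W. \<forall>x\<in>W. \<forall>y\<in>W. E v x \<longrightarrow> E v y \<longrightarrow> x = y"
proof -
  have fin: "finite W" and sym: "\<And>x y. E x y \<Longrightarrow> E y x" and irrefl: "\<And>x. \<not> E x x"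
    and acyclic: "\<And>cs. \<not> is_cycle V E cs"
    using assms finite_subset unfolding forest_def simple_graph_def by auto
  obtain w where "w \<in> W" using assms(3) by blast
  then have "is_path W E [w]" by (simp add: is_path_def)
  then obtain p where p: "is_path W E p" and longest: "\<And>q. is_path W E q \<Longrightarrow> length q \<le> length p"
    using Lattices_Big.ex_has_greatest_nat[of "is_path W E" _ length "Suc (card W)"]
      is_path_length_le[OF fin] by (metis less_Suc_eq_le)
  have p_in_V: "is_path V E p" using p assms(2) by (auto simp: is_path_def)
  have hd_in: "hd p \<in> W" using p by (auto simp: is_path_def)
  show ?thesis
  proof (intro bexI[OF _ hd_in] ballI impI; rule ccontr)
    fix x y assume "x \<in> W" "y \<in> W" "E (hd p) x" "E (hd p) y" "x \<noteq> y"
    then obtain z where z: "z \<in> W" "E (hd p) z" "1 < length p \<Longrightarrow> z \<noteq> p ! 1"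
      by (cases "x = p ! 1") auto
    show False
    proof (cases "z \<in> set p")
      case False
      then have "is_path W E (z # p)" using is_path_Cons[OF p z(1)] z(2) sym by blast
      then show False using longest by fastforce
    next
      case True
      then obtain j where j: "j < length p" "p ! j = z" by (meson in_set_conv_nth)
      have "j \<noteq> 0" using j z(2) irrefl p by (metis hd_conv_nth is_path_def)
      moreover have "j \<noteq> 1" using j z(3) by auto
      ultimately have "is_cycle V E (take (Suc j) p)"
        using is_cycle_take_path[OF p_in_V _ j(1)] j(2) z(2) sym by simp
      then show False using acyclic by blast
    qed
  qed
qed

lemma forest_leaf_cases:
  assumes "forest V E" "W \<subseteq> V" "W \<noteq> {}"
  obtains (isolated) v where "v \<in> W" "\<forall>w\<in>W. \<not> E v w"
    | (pendant) v u where "v \<in> W" "u \<in> W" "E v u" "\<forall>w\<in>W. E v w \<longrightarrow> w = u"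
  using forest_has_leaf[OF assms] by metis

subsection \<open>Maximum independent sets of forests\<close>

lemma simple_graph_indep_count_Suc:
  assumes "simple_graph V E" "W \<subseteq> V" "v \<in> W"
  shows "indep_count W E (Suc k)
           = indep_count (W - {v}) E (Suc k) + indep_count (W - insert v {w. E v w}) E k"
  using assms finite_subset indep_count_Suc[of E W v k] unfolding simple_graph_def by blast

lemma indep_count_Suc_isolated:
  assumes "simple_graph V E" "W \<subseteq> V" "v \<in> W" "\<forall>w\<in>W. \<not> E v w"
  shows "indep_count W E (Suc k) = indep_count (W - {v}) E (Suc k) + indep_count (W - {v}) E k"
proof -
  have "W - insert v {w. E v w} = W - {v}" using assms(4) by blast
  then show ?thesis using simple_graph_indep_count_Suc[OF assms(1-3)] by simp
qed

lemma indep_count_Suc_pendant: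
  assumes "simple_graph V E" "W \<subseteq> V" "v \<in> W" "E v u" "\<forall>w\<in>W. E v w \<longrightarrow> w = u"
  shows "indep_count W E (Suc k)
           = indep_count (W - {v}) E (Suc k) + indep_count (W - {v} - {u}) E k"
proof -
  have "W - insert v {w. E v w} = W - {v} - {u}" using assms(4,5) by blast
  then show ?thesis using simple_graph_indep_count_Suc[OF assms(1-3)] by simp
qed

text \<open>Only the top nonzero count \<open>i\<^sub>\<alpha>\<close> is constrained: this bounds the number of maximum
  independent sets.\<close>

definition max_indep_count_bounded :: "'a set \<Rightarrow> ('a \<Rightarrow> 'a \<Rightarrow> bool) \<Rightarrow> nat \<Rightarrow> bool" where
  "max_indep_count_bounded W E m \<longleftrightarrow>
     (\<forall>k. indep_count W E (Suc k) = 0 \<longrightarrow> indep_count W E k \<le> m)"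

lemma max_indep_count_bounded_mono:
  "max_indep_count_bounded W E m \<Longrightarrow> m \<le> m' \<Longrightarrow> max_indep_count_bounded W E m'"
  unfolding max_indep_count_bounded_def by (meson le_trans)

lemma max_indep_count_bounded_isolated:
  assumes "simple_graph V E" "W \<subseteq> V" "v \<in> W" "\<forall>w\<in>W. \<not> E v w"
    and "max_indep_count_bounded (W - {v}) E m"
  shows "max_indep_count_bounded W E m"
  unfolding max_indep_count_bounded_def
proof (intro allI impI)
  fix k assume W0: "indep_count W E (Suc k) = 0"
  let ?A = "W - {v}"
  have fin: "finite ?A" using assms(1,2) finite_subset by (auto simp: simple_graph_def)
  have rec: "\<And>k. indep_count W E (Suc k) = indep_count ?A E (Suc k) + indep_count ?A E k"
    by (rule indep_count_Suc_isolated[OF assms(1-4)])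
  obtain j where j: "k = Suc j"
    using W0 rec[of 0] indep_count_0[OF fin] by (cases k) auto
  then have "indep_count ?A E (Suc j) = 0"
    using W0 rec[of k] by simp
  then show "indep_count W E k \<le> m"
    using assms(5) rec[of j] unfolding j max_indep_count_bounded_def by simp
qed

lemma max_indep_count_bounded_pendant:
  assumes "simple_graph V E" "W \<subseteq> V" "v \<in> W" "u \<in> W" "E v u" "\<forall>w\<in>W. E v w \<longrightarrow> w = u"
    and "max_indep_count_bounded (W - {v} - {u}) E m"
    and "max_indep_count_bounded (W - {v} - insert u {w. E u w}) E m"
  shows "max_indep_count_bounded W E (2 * m)"
  unfolding max_indep_count_bounded_def
proof (intro allI impI)
  fix k assume W0: "indep_count W E (Suc k) = 0"
  let ?A = "W - {v}" and ?B = "W - {v} - {u}" and ?C = "W - {v} - insert u {w. E u w}"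
  have "u \<in> ?A" using assms(1,4,5) by (auto simp: simple_graph_def)
  have fin: "finite ?B" using assms(1,2) finite_subset by (auto simp: simple_graph_def)
  have recW: "\<And>k. indep_count W E (Suc k) = indep_count ?A E (Suc k) + indep_count ?B E k"
    by (rule indep_count_Suc_pendant[OF assms(1-3,5,6)])
  have recA: "\<And>k. indep_count ?A E (Suc k) = indep_count ?B E (Suc k) + indep_count ?C E k"
    using simple_graph_indep_count_Suc[OF assms(1) _ \<open>u \<in> ?A\<close>] assms(2) by blast
  obtain j where j: "k = Suc j"
    using W0 recW[of 0] indep_count_0[OF fin] by (cases k) auto
  then have "indep_count ?B E (Suc j) = 0" "indep_count ?C E (Suc j) = 0"
    using W0 recW[of k] recA[of k] by simp_all
  then have "indep_count ?B E j \<le> m" "indep_count ?C E j \<le> m"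
    using assms(7,8) unfolding max_indep_count_bounded_def by blast+
  then show "indep_count W E k \<le> 2 * m"
    using recW[of j] recA[of j] \<open>indep_count ?B E (Suc j) = 0\<close> unfolding j by simp
qed

lemma forest_max_indep_count_bounded:
  assumes "forest V E" "W \<subseteq> V"
  shows "max_indep_count_bounded W E (2 ^ (card W div 2))"
  using assms(2)
proof (induction "card W" arbitrary: W rule: less_induct)
  case less
  have graph: "simple_graph V E" using assms(1) by (simp add: forest_def)
  have fin: "finite W" using graph less.prems finite_subset by (auto simp: simple_graph_def)
  show ?case
  proof (cases "W = {}")
    case True
    have "indep_count W E k \<le> 1" for k
      using True by (cases k) (simp_all add: indep_count_0 indep_count_eq_0)
    then show ?thesis using True by (simp add: max_indep_count_bounded_def)
  next
    case False
    with assms(1) less.prems show ?thesis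
    proof (cases rule: forest_leaf_cases)
      case (isolated v)
      have "card (W - {v}) < card W" using fin isolated(1) by (rule card_Diff1_less)
      moreover have "(2::nat) ^ (card (W - {v}) div 2) \<le> 2 ^ (card W div 2)"
        using calculation by (intro power_increasing div_le_mono) auto
      ultimately have "max_indep_count_bounded (W - {v}) E (2 ^ (card W div 2))"
        using less.hyps[of "W - {v}"] less.prems max_indep_count_bounded_mono by blast
      then show ?thesis by (rule max_indep_count_bounded_isolated[OF graph less.prems isolated])
    next
      case (pendant v u)
      let ?B = "W - {v} - {u}" and ?C = "W - {v} - insert u {w. E u w}"
      have "u \<noteq> v" using graph pendant(3) by (auto simp: simple_graph_def)
      then have "2 \<le> card W" using card_mono[OF fin, of "{v, u}"] pendant(1,2) by simp
      then have cardB: "card ?B + 2 = card W"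
        using fin pendant(1,2) \<open>u \<noteq> v\<close> by (simp add: card_Diff_singleton_if)
      have "card ?C \<le> card ?B" using fin by (intro card_mono) auto
      then have "(2::nat) ^ (card ?C div 2) \<le> 2 ^ (card ?B div 2)"
        by (intro power_increasing div_le_mono) auto
      moreover have "max_indep_count_bounded ?C E (2 ^ (card ?C div 2))"
        using less.hyps[of ?C] less.prems cardB \<open>card ?C \<le> card ?B\<close> by auto
      ultimately have "max_indep_count_bounded ?C E (2 ^ (card ?B div 2))"
        using max_indep_count_bounded_mono by blast
      moreover have "max_indep_count_bounded ?B E (2 ^ (card ?B div 2))"
        using less.hyps[of ?B] less.prems cardB by auto
      moreover have "2 * 2 ^ (card ?B div 2) = (2::nat) ^ (card W div 2)"
        using cardB by (metis add_2_eq_Suc' div2_Suc_Suc power_Suc)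
      ultimately show ?thesis
        using max_indep_count_bounded_pendant[OF graph less.prems pendant] by metis
    qed
  qed
qed

subsection \<open>The ratio bound\<close>

definition forest_root_bound :: "nat \<Rightarrow> real" where
  "forest_root_bound n =
     (if even n then 2 ^ (n div 2) / 2 + real n / 2 else 2 ^ (n div 2) + (real n - 1) / 2)"

lemma forest_root_bound_mono: "m \<le> n \<Longrightarrow> forest_root_bound m \<le> forest_root_bound n"
proof (induction rule: dec_induct)
  case (step n)
  have "(1::real) \<le> 2 ^ (n div 2)" by simp
  then have "forest_root_bound n \<le> forest_root_bound (Suc n)"
    by (cases "even n") (auto simp: forest_root_bound_def elim!: evenE oddE)
  then show ?case using step.IH by linarith
qed simp

lemma forest_root_bound_ge_1: "1 \<le> n \<Longrightarrow> 1 \<le> forest_root_bound n"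
  using forest_root_bound_mono[of 1 n] by (simp add: forest_root_bound_def)

lemma forest_root_bound_Suc: "1 \<le> n \<Longrightarrow> 1 + forest_root_bound n \<le> forest_root_bound (Suc n)"
proof (cases "even n")
  case True
  assume "1 \<le> n"
  with True obtain m where "n = 2 * Suc m" by (metis evenE Suc_pred' mult_0_right not_one_le_zero neq0_conv)
  moreover have "(1::real) \<le> 2 ^ m" by simp
  ultimately show ?thesis by (simp add: forest_root_bound_def)
qed (auto simp: forest_root_bound_def elim!: oddE)

lemma forest_root_bound_add_3:
  "1 + forest_root_bound (Suc n) + 2 ^ (n div 2) \<le> forest_root_bound (n + 3)"
  by (cases "even n") (auto simp: forest_root_bound_def elim!: evenE oddE)

lemma forest_root_bound_eq:
  assumes "1 \<le> n"
  shows "forest_root_bound n = (if odd n then 2 powr ((real n - 1) / 2) + (real n - 1) / 2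
                                else 2 powr ((real n - 2) / 2) + real n / 2)"
proof (cases "even n")
  case True
  with assms obtain m where m: "n = 2 * Suc m" by (metis evenE Suc_pred' mult_0_right not_one_le_zero neq0_conv)
  then have "2 powr ((real n - 2) / 2) = 2 ^ m" by (simp add: powr_realpow)
  then show ?thesis using m by (simp add: forest_root_bound_def)
next
  case False
  then obtain m where m: "n = 2 * m + 1" by (rule oddE)
  then have "2 powr ((real n - 1) / 2) = 2 ^ m" by (simp add: powr_realpow)
  then show ?thesis using m by (simp add: forest_root_bound_def)
qed

definition indep_ratio_bounded :: "'a set \<Rightarrow> ('a \<Rightarrow> 'a \<Rightarrow> bool) \<Rightarrow> real \<Rightarrow> bool" where
  "indep_ratio_bounded W E c \<longleftrightarrow> (\<forall>k. 0 < indep_count W E (Suc k) \<longrightarrow>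
     real (indep_count W E k) \<le> c * real (indep_count W E (Suc k)))"

lemma indep_ratio_bounded_mono:
  assumes "indep_ratio_bounded W E c" "c \<le> c'"
  shows "indep_ratio_bounded W E c'"
  unfolding indep_ratio_bounded_def
proof (intro allI impI)
  fix k assume "0 < indep_count W E (Suc k)"
  then have "real (indep_count W E k) \<le> c * real (indep_count W E (Suc k))"
    using assms(1) by (simp add: indep_ratio_bounded_def)
  also have "\<dots> \<le> c' * real (indep_count W E (Suc k))"
    using assms(2) by (simp add: mult_right_mono)
  finally show "real (indep_count W E k) \<le> c' * real (indep_count W E (Suc k))" .
qed

lemma indep_ratio_boundedI:
  assumes "finite W" "1 \<le> c"
    and "\<And>k. 0 < indep_count W E (Suc (Suc k)) \<Longrightarrow>
           real (indep_count W E (Suc k)) \<le> c * real (indep_count W E (Suc (Suc k)))"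
  shows "indep_ratio_bounded W E c"
  unfolding indep_ratio_bounded_def
proof (intro allI impI)
  fix k assume pos: "0 < indep_count W E (Suc k)"
  show "real (indep_count W E k) \<le> c * real (indep_count W E (Suc k))"
  proof (cases k)
    case 0
    have "1 \<le> c * 1" using assms(2) by simp
    also have "\<dots> \<le> c * real (indep_count W E (Suc k))"
      using pos assms(2) by (intro mult_left_mono) auto
    finally show ?thesis using 0 indep_count_0[OF assms(1)] by simp
  qed (use assms(3) pos in blast)
qed

text \<open>The step shared by isolated and pendant vertices \<open>v\<close> of \<open>W\<close>: here \<open>A = W - v\<close>, \<open>B = W - N[v]\<close>,
  and \<open>pos\<close> says that deleting \<open>v\<close> does not lower the independence number.\<close>

lemma indep_ratio_deletion_step:
  assumes "finite A" "A - {u} \<subseteq> B" "B \<subseteq> A"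
    and rec: "\<And>k. indep_count W E (Suc k) = indep_count A E (Suc k) + indep_count B E k"
    and "indep_ratio_bounded A E c" "indep_ratio_bounded B E c"
    and pos: "0 < indep_count A E (Suc (Suc k))"
  shows "real (indep_count W E (Suc k)) \<le> c * real (indep_count W E (Suc (Suc k)))"
proof -
  have "finite B" using assms(1,3) finite_subset by blast
  have "0 < indep_count (A - {u}) E (Suc k)" by (rule indep_count_pos_Diff[OF assms(1) pos])
  also have "\<dots> \<le> indep_count B E (Suc k)" by (rule indep_count_mono[OF \<open>finite B\<close> assms(2)])
  finally have "real (indep_count B E k) \<le> c * real (indep_count B E (Suc k))"
    using assms(6) by (simp add: indep_ratio_bounded_def)
  moreover have "real (indep_count A E (Suc k)) \<le> c * real (indep_count A E (Suc (Suc k)))"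
    using assms(5) pos by (simp add: indep_ratio_bounded_def)
  ultimately show ?thesis
    unfolding rec of_nat_add by (simp add: distrib_left)
qed

lemma indep_ratio_bounded_isolated:
  assumes "simple_graph V E" "W \<subseteq> V" "v \<in> W" "\<forall>w\<in>W. \<not> E v w"
    and ratio: "indep_ratio_bounded (W - {v}) E (forest_root_bound (card (W - {v})))"
  shows "indep_ratio_bounded W E (forest_root_bound (card W))"
proof -
  let ?A = "W - {v}" and ?F = "forest_root_bound (card W)"
  have fin: "finite W" using assms(1,2) finite_subset by (auto simp: simple_graph_def)
  have cardW: "card W = Suc (card ?A)" using card_Suc_Diff1[OF fin assms(3)] by simp
  have rec: "\<And>k. indep_count W E (Suc k) = indep_count ?A E (Suc k) + indep_count ?A E k"
    by (rule indep_count_Suc_isolated[OF assms(1-4)])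
  have ratio': "indep_ratio_bounded ?A E ?F"
    using indep_ratio_bounded_mono[OF ratio forest_root_bound_mono] cardW by simp
  show ?thesis
  proof (rule indep_ratio_boundedI[OF fin])
    show "1 \<le> ?F" using cardW by (simp add: forest_root_bound_ge_1)
    fix k assume posW: "0 < indep_count W E (Suc (Suc k))"
    show "real (indep_count W E (Suc k)) \<le> ?F * real (indep_count W E (Suc (Suc k)))"
    proof (cases "0 < indep_count ?A E (Suc (Suc k))")
      case True
      show ?thesis by (rule indep_ratio_deletion_step[OF _ _ order_refl rec ratio' ratio' True]) (use fin in auto)
    next
      case False
      then have top: "indep_count W E (Suc (Suc k)) = indep_count ?A E (Suc k)" using rec by simp
      have "?A \<noteq> {}"
      proof
        assume "?A = {}"
        then have "indep_count ?A E (Suc k) = 0"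
          by (metis card.empty finite.emptyI indep_count_eq_0 zero_less_Suc)
        then show False using posW top by simp
      qed
      then have step: "1 + forest_root_bound (card ?A) \<le> ?F"
        using cardW fin forest_root_bound_Suc by (simp add: Suc_leI card_gt_0_iff)
      have "real (indep_count ?A E k) \<le> forest_root_bound (card ?A) * real (indep_count ?A E (Suc k))"
        using ratio posW top by (simp add: indep_ratio_bounded_def)
      then have "real (indep_count W E (Suc k))
                   \<le> (1 + forest_root_bound (card ?A)) * real (indep_count ?A E (Suc k))"
        using rec[of k] by (simp add: algebra_simps)
      also have "\<dots> \<le> ?F * real (indep_count ?A E (Suc k))"
        using step by (rule mult_right_mono) simp
      finally show ?thesis unfolding top .
    qed
  qed
qed

text \<open>The case where deleting the pendant vertex \<open>v\<close> lowers the independence number. Then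
  \<open>C = A - N[u]\<close> has smaller independence number than \<open>B = A - u\<close>, so \<open>C \<subset> B\<close>, and
  \<open>i\<^sub>k(C)\<close> counts maximum independent sets of \<open>C\<close>.\<close>

lemma indep_ratio_pendant_top_step:
  assumes "finite B" "C \<subseteq> B" "card W = card B + 2"
    and recW: "\<And>k. indep_count W E (Suc k) = indep_count A E (Suc k) + indep_count B E k"
    and recA: "\<And>k. indep_count A E (Suc k) = indep_count B E (Suc k) + indep_count C E k"
    and ratioB: "indep_ratio_bounded B E (forest_root_bound (card B))"
    and maxC: "max_indep_count_bounded C E (2 ^ (card C div 2))"
    and posW: "0 < indep_count W E (Suc (Suc k))" and A0: "indep_count A E (Suc (Suc k)) = 0"
  shows "real (indep_count W E (Suc k))
           \<le> forest_root_bound (card W) * real (indep_count W E (Suc (Suc k)))"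
proof -
  have top: "indep_count W E (Suc (Suc k)) = indep_count B E (Suc k)"
    and C0: "indep_count C E (Suc k) = 0"
    using recW[of "Suc k"] recA[of "Suc k"] A0 by simp_all
  have "C \<noteq> B"
  proof
    assume "C = B"
    then show False using C0 top posW by simp
  qed
  then have "card C < card B" using assms(1,2) by (intro psubset_card_mono) auto
  define n where "n = card B - 1"
  have n: "card W = n + 3" "card B = Suc n" "card C \<le> n"
    using assms(3) \<open>card C < card B\<close> unfolding n_def by arith+
  have "indep_count C E k \<le> 2 ^ (card C div 2)"
    using maxC C0 by (simp add: max_indep_count_bounded_def)
  also have "\<dots> \<le> 2 ^ (n div 2)" using n(3) by (intro power_increasing div_le_mono) auto
  finally have "real (indep_count C E k) \<le> 2 ^ (n div 2)"
    by (metis of_nat_le_iff of_nat_numeral of_nat_power)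
  moreover have "(2::real) ^ (n div 2) \<le> 2 ^ (n div 2) * real (indep_count B E (Suc k))"
    using posW top by simp
  moreover have "real (indep_count B E k)
                   \<le> forest_root_bound (Suc n) * real (indep_count B E (Suc k))"
    using ratioB posW top n(2) by (simp add: indep_ratio_bounded_def)
  moreover have "real (indep_count W E (Suc k))
      = real (indep_count B E (Suc k)) + real (indep_count C E k) + real (indep_count B E k)"
    using recW[of k] recA[of k] by simp
  ultimately have "real (indep_count W E (Suc k))
      \<le> real (indep_count B E (Suc k)) + 2 ^ (n div 2) * real (indep_count B E (Suc k))
         + forest_root_bound (Suc n) * real (indep_count B E (Suc k))"
    by linarith
  also have "\<dots> = (1 + forest_root_bound (Suc n) + 2 ^ (n div 2)) * real (indep_count B E (Suc k))"
    by (simp add: algebra_simps)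
  also have "\<dots> \<le> forest_root_bound (n + 3) * real (indep_count B E (Suc k))"
    by (rule mult_right_mono[OF forest_root_bound_add_3]) simp
  finally show ?thesis using top n(1) by simp
qed

lemma forest_indep_ratio_bounded_pendant:
  assumes forest: "forest V E" and "W \<subseteq> V" "v \<in> W" "u \<in> W" "E v u" "\<forall>w\<in>W. E v w \<longrightarrow> w = u"
    and ratioA: "indep_ratio_bounded (W - {v}) E (forest_root_bound (card (W - {v})))"
    and ratioB: "indep_ratio_bounded (W - {v} - {u}) E (forest_root_bound (card (W - {v} - {u})))"
  shows "indep_ratio_bounded W E (forest_root_bound (card W))"
proof -
  let ?A = "W - {v}" and ?B = "W - {v} - {u}" and ?C = "W - {v} - insert u {w. E u w}"
  let ?F = "forest_root_bound (card W)"
  have graph: "simple_graph V E" using forest by (simp add: forest_def)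
  have fin: "finite W" using graph assms(2) finite_subset by (auto simp: simple_graph_def)
  have "u \<in> ?A" using graph assms(4,5) by (auto simp: simple_graph_def)
  have cardA: "card W = Suc (card ?A)" using card_Suc_Diff1[OF fin assms(3)] by simp
  have cardB: "card ?A = Suc (card ?B)" using card_Suc_Diff1[OF _ \<open>u \<in> ?A\<close>] fin by simp
  have recW: "\<And>k. indep_count W E (Suc k) = indep_count ?A E (Suc k) + indep_count ?B E k"
    by (rule indep_count_Suc_pendant[OF graph assms(2,3,5,6)])
  have recA: "\<And>k. indep_count ?A E (Suc k) = indep_count ?B E (Suc k) + indep_count ?C E k"
    using simple_graph_indep_count_Suc[OF graph _ \<open>u \<in> ?A\<close>] assms(2) by blast
  have "indep_ratio_bounded ?A E ?F" "indep_ratio_bounded ?B E ?F"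
    using indep_ratio_bounded_mono[OF ratioA forest_root_bound_mono]
      indep_ratio_bounded_mono[OF ratioB forest_root_bound_mono] cardA cardB by simp_all
  note ratio = this
  have maxC: "max_indep_count_bounded ?C E (2 ^ (card ?C div 2))"
    using assms(2) by (intro forest_max_indep_count_bounded[OF forest]) auto
  show ?thesis
  proof (rule indep_ratio_boundedI[OF fin])
    show "1 \<le> ?F" using cardA by (simp add: forest_root_bound_ge_1)
    fix k assume posW: "0 < indep_count W E (Suc (Suc k))"
    show "real (indep_count W E (Suc k)) \<le> ?F * real (indep_count W E (Suc (Suc k)))"
    proof (cases "indep_count ?A E (Suc (Suc k)) = 0")
      case True
      show ?thesis
        by (rule indep_ratio_pendant_top_step[OF _ _ _ recW recA ratioB maxC posW True])
           (use fin cardA cardB in auto)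
    next
      case False
      then show ?thesis
        by (intro indep_ratio_deletion_step[of ?A u ?B, OF _ _ _ recW ratio]) (use fin in auto)
    qed
  qed
qed

lemma forest_indep_ratio_bounded:
  assumes "forest V E" "W \<subseteq> V"
  shows "indep_ratio_bounded W E (forest_root_bound (card W))"
  using assms(2)
proof (induction "card W" arbitrary: W rule: less_induct)
  case less
  have graph: "simple_graph V E" using assms(1) by (simp add: forest_def)
  have fin: "finite W" using graph less.prems finite_subset by (auto simp: simple_graph_def)
  show ?case
  proof (cases "W = {}")
    case True
    then show ?thesis by (simp add: indep_ratio_bounded_def indep_count_eq_0)
  next
    case False
    with assms(1) less.prems show ?thesis
    proof (cases rule: forest_leaf_cases)
      case (isolated v)
      have "card (W - {v}) < card W" using fin isolated(1) by (rule card_Diff1_less)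
      then show ?thesis
        using less.hyps less.prems by (intro indep_ratio_bounded_isolated[OF graph less.prems isolated]) auto
    next
      case (pendant v u)
      have "card (W - {v} - {u}) \<le> card (W - {v})" using fin by (intro card_mono) auto
      moreover have "card (W - {v}) < card W" using fin pendant(1) by (rule card_Diff1_less)
      ultimately show ?thesis
        using less.hyps[of "W - {v}"] less.hyps[of "W - {v} - {u}"] less.prems
        by (intro forest_indep_ratio_bounded_pendant[OF assms(1) less.prems pendant]) auto
    qed
  qed
qed

subsection \<open>Roots\<close>

definition indep_number :: "'a set \<Rightarrow> ('a \<Rightarrow> 'a \<Rightarrow> bool) \<Rightarrow> nat" where
  "indep_number W E = Max {k. 0 < indep_count W E k}"

lemma indep_count_pos_iff:
  assumes "finite W"
  shows "0 < indep_count W E k \<longleftrightarrow> k \<le> indep_number W E"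
proof -
  let ?K = "{k. 0 < indep_count W E k}"
  have "?K \<subseteq> {..card W}"
  proof
    fix k assume "k \<in> ?K"
    then have "\<not> card W < k" using indep_count_eq_0[OF assms, of k E] by auto
    then show "k \<in> {..card W}" by simp
  qed
  then have "finite ?K" by (rule finite_subset) simp
  moreover have "0 \<in> ?K" using indep_count_0[OF assms] by simp
  ultimately have "indep_number W E \<in> ?K" "\<And>k. k \<in> ?K \<Longrightarrow> k \<le> indep_number W E"
    unfolding indep_number_def using Max_in by auto
  then show ?thesis using indep_count_pos_le[OF assms, of E "indep_number W E" k] by auto
qed

lemma poly_indep_poly:
  assumes "finite W"
  shows "poly (indep_poly W E) z = (\<Sum>k\<le>indep_number W E. of_nat (indep_count W E k) * z ^ k)"
proof -
  have "0 < indep_count W E (indep_number W E)" using indep_count_pos_iff[OF assms] by simp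
  then have "indep_number W E \<le> card W" using indep_count_eq_0[OF assms] by (metis not_le less_irrefl)
  moreover have "indep_count W E k = 0" if "indep_number W E < k" for k
    using that indep_count_pos_iff[OF assms, of E k] by simp
  ultimately show ?thesis
    unfolding indep_poly_def poly_sum poly_monom by (intro sum.mono_neutral_right) auto
qed

text \<open>With \<open>b\<close> nondecreasing, the left-hand side equals
  \<open>b 0 + (\<Sum>k=1..d. (b k - b (k - 1)) * w ^ k)\<close>, a sum with nonnegative weights.\<close>

lemma norm_telescoping_le:
  fixes b :: "nat \<Rightarrow> real" and w :: complex
  assumes "1 \<le> cmod w" "\<And>k. k < d \<Longrightarrow> b k \<le> b (Suc k)" "\<And>k. k \<le> d \<Longrightarrow> 0 \<le> b k"
  shows "cmod ((1 - w) * (\<Sum>k\<le>d. of_real (b k) * w ^ k) + of_real (b d) * w ^ Suc d)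
           \<le> b d * cmod w ^ d"
  using assms(2,3)
proof (induction d)
  case 0
  have "(1 - w) * of_real (b 0) + of_real (b 0) * w = of_real (b 0)" by (simp add: algebra_simps)
  then show ?case using "0.prems"(2)[of 0] by simp
next
  case (Suc d)
  let ?X = "(1 - w) * (\<Sum>k\<le>d. of_real (b k) * w ^ k) + of_real (b d) * w ^ Suc d"
  have le: "b d \<le> b (Suc d)" and "0 \<le> b d" using Suc.prems by simp_all
  have "cmod ?X \<le> b d * cmod w ^ d" using Suc by simp
  also have "\<dots> \<le> b d * cmod w ^ Suc d"
    using \<open>0 \<le> b d\<close> assms(1) by (intro mult_left_mono power_increasing) auto
  finally have X: "cmod ?X \<le> b d * cmod w ^ Suc d" .
  have "(1 - w) * (\<Sum>k\<le>Suc d. of_real (b k) * w ^ k) + of_real (b (Suc d)) * w ^ Suc (Suc d)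
      = ?X + of_real (b (Suc d) - b d) * w ^ Suc d"
    unfolding sum.atMost_Suc power_Suc[of w "Suc d"] of_real_diff by (simp add: algebra_simps)
  also have "cmod \<dots> \<le> cmod ?X + cmod (of_real (b (Suc d) - b d) * w ^ Suc d)"
    by (rule norm_triangle_ineq)
  also have "\<dots> \<le> b d * cmod w ^ Suc d + (b (Suc d) - b d) * cmod w ^ Suc d"
    using X le by (simp add: norm_mult norm_power del: of_real_diff)
  also have "\<dots> = b (Suc d) * cmod w ^ Suc d"
    by (simp add: algebra_simps)
  finally show ?case .
qed

lemma enestrom_kakeya:
  fixes a :: "nat \<Rightarrow> real" and z :: complex
  assumes pos: "\<And>k. k \<le> d \<Longrightarrow> 0 < a k" and ratio: "\<And>k. k < d \<Longrightarrow> a k \<le> R * a (Suc k)"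
    and "0 < R" and root: "(\<Sum>k\<le>d. of_real (a k) * z ^ k) = 0"
  shows "cmod z \<le> R"
proof (rule ccontr)
  assume "\<not> cmod z \<le> R"
  define w where "w = z / of_real R"
  define b where "b k = a k * R ^ k" for k
  have w: "1 < cmod w" using \<open>\<not> cmod z \<le> R\<close> \<open>0 < R\<close> by (simp add: w_def norm_divide)
  have b_mono: "b k \<le> b (Suc k)" if "k < d" for k
    using mult_right_mono[OF ratio[OF that], of "R ^ k"] \<open>0 < R\<close> by (simp add: b_def algebra_simps)
  have b_pos: "0 < b k" if "k \<le> d" for k using pos[OF that] \<open>0 < R\<close> by (simp add: b_def)
  have "of_real (b k) * w ^ k = of_real (a k) * z ^ k" for k
    using \<open>0 < R\<close> by (simp add: b_def w_def power_divide)
  then have "(\<Sum>k\<le>d. of_real (b k) * w ^ k) = 0" using root by simp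
  then have "b d * cmod w ^ Suc d \<le> b d * cmod w ^ d"
    using norm_telescoping_le[of w d b] w b_mono b_pos b_pos[of d]
    by (simp add: norm_mult norm_power less_imp_le)
  then have "cmod w * cmod w ^ d \<le> 1 * cmod w ^ d" using b_pos[of d] by simp
  moreover have "0 < cmod w ^ d" using w by (intro zero_less_power) linarith
  ultimately show False using w mult_right_le_imp_le by fastforce
qed

theorem theorem5:
  fixes V :: "'a set" and E :: "'a \<Rightarrow> 'a \<Rightarrow> bool" and n :: nat and z :: complex
  assumes "n \<ge> 1"
    and "forest V E"
    and "card V = n"
    and "poly (indep_poly V E) z = 0"
  shows "cmod z \<le> (if odd n then 2 powr ((real n - 1) / 2) + (real n - 1) / 2
                    else 2 powr ((real n - 2) / 2) + real n / 2)"
proof -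
  have fin: "finite V" using assms(2) by (simp add: forest_def simple_graph_def)
  have "cmod z \<le> forest_root_bound n"
  proof (rule enestrom_kakeya[where a = "\<lambda>k. real (indep_count V E k)" and d = "indep_number V E"])
    show "0 < real (indep_count V E k)" if "k \<le> indep_number V E" for k
      using that indep_count_pos_iff[OF fin] by simp
    show "real (indep_count V E k) \<le> forest_root_bound n * real (indep_count V E (Suc k))"
      if "k < indep_number V E" for k
      using forest_indep_ratio_bounded[OF assms(2) order_refl] that assms(3)
        indep_count_pos_iff[OF fin, of E "Suc k"] by (simp add: indep_ratio_bounded_def)
    show "0 < forest_root_bound n" using forest_root_bound_ge_1[OF assms(1)] by simp
    show "(\<Sum>k\<le>indep_number V E. of_real (real (indep_count V E k)) * z ^ k) = 0"
      using assms(4) poly_indep_poly[OF fin] by simp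
  qed
  then show ?thesis using forest_root_bound_eq[OF assms(1)] by simp
qed

end
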